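(* Let $n,m\ge1$, let $H$ be a group, let $\sigma_{n+m}\colon G_{n+m}\to S_{n+m}$ and $\sigma_n\colon G_n\to S_n$ be surjective homomorphisms with kernels $P_{\sigma_{n+m}}$ and $P_{\sigma_n}$, let $f\colon P_{\sigma_{n+m}}\to P_{\sigma_n}$ be a surjective homomorphism, and let $\psi_m\colon H^{n+m}\to H^n$ be the projection onto the first $n$ factors. For $k\in\{n,n+m\}$ let $PW_k$ be the preimage of $P_{\sigma_k}$ under the projection $H^k\rtimes_{\sigma_k}G_k\to G_k$, identified with the direct product $H^k\times P_{\sigma_k}$. Then the homomorphism $(\psi_m,f)\colon PW_{n+m}\to PW_n$, $(\mathbf h,g)\mapsto(\psi_m(\mathbf h),f(g))$, admits a section (a homomorphism $s$ with $(\psi_m,f)\circ s=\mathrm{id}$) if and only if $f$ admits a section.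
   Context: For a surjective homomorphism $\tau\colon G\to S_k$, $H^k\rtimes_\tau G$ is the semidirect product in which $G$ acts on $H^k$ by permuting coordinates through $\tau$: $g\cdot(h_1,\dots,h_k)=(h_{\tau(g)(1)},\dots,h_{\tau(g)(k)})$ (as a left action). Since $\ker\tau$ acts trivially, the preimage of $\ker\tau$ in $H^k\rtimes_\tau G$ is the internal direct product $H^k\times\ker\tau$. *)

theory Defs
  imports "HOL-Algebra.Algebra"
begin

definition kernel_grp :: "('a, 'm) monoid_scheme \<Rightarrow> nat \<Rightarrow> ('a \<Rightarrow> nat \<Rightarrow> nat) \<Rightarrow> ('a, 'm) monoid_scheme"
  where "kernel_grp G k \<sigma> = G\<lparr>carrier := kernel G (sym_group k) \<sigma>\<rparr>"

definition power_grp :: "('h, 'c) monoid_scheme \<Rightarrow> nat \<Rightarrow> (nat \<Rightarrow> 'h) monoid"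
  where "power_grp H k = product_group {1..k} (\<lambda>_. H)"

definition PW :: "('h, 'c) monoid_scheme \<Rightarrow> ('a, 'm) monoid_scheme \<Rightarrow> nat \<Rightarrow> ('a \<Rightarrow> nat \<Rightarrow> nat) \<Rightarrow> ((nat \<Rightarrow> 'h) \<times> 'a) monoid"
  where "PW H G k \<sigma> = power_grp H k \<times>\<times> kernel_grp G k \<sigma>"

definition proj_first :: "nat \<Rightarrow> (nat \<Rightarrow> 'h) \<Rightarrow> (nat \<Rightarrow> 'h)"
  where "proj_first n h = restrict h {1..n}"

end

theory Submission
  imports Defs
begin

text \<open>Both groups PW are direct products, and the map in question is the product of the
  projection psi_m with f. The projection always has a homomorphic section (extend by the
  identity in the last m coordinates), so a section of f yields one of the product map;
  conversely a section s of the product map gives the section g \<mapsto> snd (s (1, g)) of f.\<close>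

definition has_hom_section :: "('a, 'm) monoid_scheme \<Rightarrow> ('b, 'n) monoid_scheme \<Rightarrow> ('a \<Rightarrow> 'b) \<Rightarrow> bool"
  where "has_hom_section G H f \<longleftrightarrow> (\<exists>s \<in> hom H G. \<forall>y \<in> carrier H. f (s y) = y)"

lemma hom_DirProd_map:
  assumes "f \<in> hom A A'" and "g \<in> hom B B'"
  shows "(\<lambda>(x, y). (f x, g y)) \<in> hom (A \<times>\<times> B) (A' \<times>\<times> B')"
  using assms by (auto simp: hom_def Pi_def)

lemma hom_DirProd_snd: "snd \<in> hom (A \<times>\<times> B) B"
  by (auto simp: hom_def mult_DirProd')

lemma (in monoid) hom_DirProd_inr: "(\<lambda>y. (\<one>, y)) \<in> hom B (G \<times>\<times> B)"
  by (auto simp: hom_def)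

lemma has_hom_section_DirProd_map:
  assumes "has_hom_section A A' f" and "has_hom_section B B' g"
  shows "has_hom_section (A \<times>\<times> B) (A' \<times>\<times> B') (\<lambda>(x, y). (f x, g y))"
proof -
  obtain s where s: "s \<in> hom A' A" "\<And>x. x \<in> carrier A' \<Longrightarrow> f (s x) = x"
    using assms(1) unfolding has_hom_section_def by blast
  obtain t where t: "t \<in> hom B' B" "\<And>y. y \<in> carrier B' \<Longrightarrow> g (t y) = y"
    using assms(2) unfolding has_hom_section_def by blast
  show ?thesis
    unfolding has_hom_section_def
    by (rule bexI[of _ "\<lambda>(x, y). (s x, t y)"]) (auto simp: s t hom_DirProd_map)
qed

lemma has_hom_section_DirProd_mapD:
  assumes "monoid A'" and "has_hom_section (A \<times>\<times> B) (A' \<times>\<times> B') (\<lambda>(x, y). (f x, g y))"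
  shows "has_hom_section B B' g"
proof -
  obtain s where s: "s \<in> hom (A' \<times>\<times> B') (A \<times>\<times> B)"
    and sec: "\<And>z. z \<in> carrier (A' \<times>\<times> B') \<Longrightarrow> (\<lambda>(x, y). (f x, g y)) (s z) = z"
    using assms(2) unfolding has_hom_section_def by blast
  let ?t = "snd \<circ> (s \<circ> (\<lambda>y. (\<one>\<^bsub>A'\<^esub>, y)))"
  have "?t \<in> hom B' B"
    using hom_compose[OF hom_compose[OF monoid.hom_DirProd_inr[OF assms(1)] s] hom_DirProd_snd] .
  moreover have "g (?t y) = y" if "y \<in> carrier B'" for y
  proof -
    have "(\<lambda>(x, y). (f x, g y)) (s (\<one>\<^bsub>A'\<^esub>, y)) = (\<one>\<^bsub>A'\<^esub>, y)"
      using sec that monoid.one_closed[OF assms(1)] by simp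
    then show ?thesis by (cases "s (\<one>\<^bsub>A'\<^esub>, y)") simp
  qed
  ultimately show ?thesis unfolding has_hom_section_def by blast
qed

lemma has_hom_section_DirProd_map_iff:
  assumes "monoid A'" and "has_hom_section A A' f"
  shows "has_hom_section (A \<times>\<times> B) (A' \<times>\<times> B') (\<lambda>(x, y). (f x, g y)) \<longleftrightarrow> has_hom_section B B' g"
  using assms has_hom_section_DirProd_map has_hom_section_DirProd_mapD by blast

lemma has_hom_section_product_group_restrict:
  assumes "I \<subseteq> J" and "\<And>i. i \<in> J - I \<Longrightarrow> monoid (G i)"
  shows "has_hom_section (product_group J G) (product_group I G) (\<lambda>x. restrict x I)"
proof -
  let ?ext = "\<lambda>x. \<lambda>i\<in>J. if i \<in> I then x i else \<one>\<^bsub>G i\<^esub>"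
  have "?ext \<in> hom (product_group I G) (product_group J G)"
  proof (rule homI)
    show "?ext x \<in> carrier (product_group J G)" if "x \<in> carrier (product_group I G)" for x
      using that assms(2) by (auto simp: monoid.one_closed PiE_iff)
    show "?ext (x \<otimes>\<^bsub>product_group I G\<^esub> y) = ?ext x \<otimes>\<^bsub>product_group J G\<^esub> ?ext y" for x y
      using assms(2) by (auto simp: fun_eq_iff monoid.l_one monoid.one_closed)
  qed
  moreover have "restrict (?ext x) I = x" if "x \<in> carrier (product_group I G)" for x
    using that assms(1) by (auto simp: fun_eq_iff PiE_def extensional_def)
  ultimately show ?thesis
    unfolding has_hom_section_def by (intro bexI[of _ ?ext]) blast+
qed

lemma has_hom_section_proj_first:
  assumes "monoid H" and "n \<le> k"
  shows "has_hom_section (power_grp H k) (power_grp H n) (proj_first n)"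
proof -
  have restrict_eq: "proj_first n = (\<lambda>x. restrict x {1..n})"
    by (simp add: fun_eq_iff proj_first_def)
  have "{1..n} \<subseteq> {1..k}"
    using assms(2) by simp
  then show ?thesis
    unfolding power_grp_def restrict_eq
    by (rule has_hom_section_product_group_restrict) (rule assms(1))
qed

theorem proposition5p21:
  fixes n m :: nat
    and H :: "('h, 'c) monoid_scheme"
    and G1 :: "('a, 'd) monoid_scheme" and G2 :: "('b, 'e) monoid_scheme"
    and \<sigma>1 :: "'a \<Rightarrow> nat \<Rightarrow> nat" and \<sigma>2 :: "'b \<Rightarrow> nat \<Rightarrow> nat"
    and f :: "'a \<Rightarrow> 'b"
  assumes "n \<ge> 1" and "m \<ge> 1"
    and "group H" and "group G1" and "group G2"
    and "\<sigma>1 \<in> hom G1 (sym_group (n + m))" and "\<sigma>1 ` carrier G1 = carrier (sym_group (n + m))"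
    and "\<sigma>2 \<in> hom G2 (sym_group n)" and "\<sigma>2 ` carrier G2 = carrier (sym_group n)"
    and "f \<in> hom (kernel_grp G1 (n + m) \<sigma>1) (kernel_grp G2 n \<sigma>2)"
    and "f ` carrier (kernel_grp G1 (n + m) \<sigma>1) = carrier (kernel_grp G2 n \<sigma>2)"
  shows "(\<exists>s \<in> hom (PW H G2 n \<sigma>2) (PW H G1 (n + m) \<sigma>1).
            \<forall>x \<in> carrier (PW H G2 n \<sigma>2).
              (\<lambda>(h, g). (proj_first n h, f g)) (s x) = x)
         \<longleftrightarrow>
         (\<exists>t \<in> hom (kernel_grp G2 n \<sigma>2) (kernel_grp G1 (n + m) \<sigma>1).
            \<forall>y \<in> carrier (kernel_grp G2 n \<sigma>2). f (t y) = y)"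
proof -
  have "monoid (power_grp H n)"
    using \<open>group H\<close> by (simp add: power_grp_def group.is_monoid)
  moreover have "has_hom_section (power_grp H (n + m)) (power_grp H n) (proj_first n)"
    using \<open>group H\<close> by (simp add: has_hom_section_proj_first group.is_monoid)
  ultimately have "has_hom_section (PW H G1 (n + m) \<sigma>1) (PW H G2 n \<sigma>2) (\<lambda>(h, g). (proj_first n h, f g))
      \<longleftrightarrow> has_hom_section (kernel_grp G1 (n + m) \<sigma>1) (kernel_grp G2 n \<sigma>2) f"
    unfolding PW_def by (rule has_hom_section_DirProd_map_iff)
  then show ?thesis
    unfolding has_hom_section_def .
qed

end
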